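(* Let $k$ be a field of characteristic $0$ or greater than $d$, $d\ge3$, and $(V,\Theta)$ a regular $d$-linear space over $k$ with center $\mathrm{Cent}_k(\Theta)$ and Lie algebra $\mathcal{L}_\Theta$. For $f\in\mathcal{L}_\Theta$ and $\phi\in\mathrm{Cent}_k(\Theta)$ one has $[f,\phi]=f\phi-\phi f\in\mathrm{Cent}_k(\Theta)$, and $f\cdot\phi:=[f,\phi]$ makes $\mathrm{Cent}_k(\Theta)$ a module over the Lie algebra $\mathcal{L}_\Theta$.
   Context: $(V,\Theta)$: $V$ finite-dimensional $k$-space, $\Theta:V^d\to k$ symmetric $d$-linear, regular meaning $\Theta(w,u_2,\dots,u_d)=0\ \forall u_i\Rightarrow w=0$. $\mathrm{Cent}_k(\Theta)=\{f\in\mathrm{End}_k(V):\Theta(fu_1,u_2,\dots,u_d)=\Theta(u_1,fu_2,\dots,u_d)\ \forall u_i\}$. $\mathcal{L}_\Theta=\{L\in\mathfrak{gl}(V):\sum_{i=1}^d\Theta(u_1,\dots,L(u_i),\dots,u_d)=0\ \forall u_i\}$ with commutator bracket. *)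

theory Defs
  imports Complex_Main "HOL-Combinatorics.Permutations"
begin

text \<open>A d-tuple (u_1,...,u_d) is represented
  by u :: nat \<Rightarrow> 'v, using the entries u 0, ..., u (d-1).
  A d-linear form is Theta :: (nat \<Rightarrow> 'v) \<Rightarrow> 'k depending only on these entries.\<close>

definition multilinear_form ::
  "('k::field \<Rightarrow> 'v::ab_group_add \<Rightarrow> 'v) \<Rightarrow> nat \<Rightarrow> ((nat \<Rightarrow> 'v) \<Rightarrow> 'k) \<Rightarrow> bool" where
  "multilinear_form scale d Theta \<longleftrightarrow>
     (\<forall>u w. (\<forall>i<d. u i = w i) \<longrightarrow> Theta u = Theta w) \<and>
     (\<forall>i<d. \<forall>u x y c. Theta (u(i := scale c x + y)) = c * Theta (u(i := x)) + Theta (u(i := y)))"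

definition symmetric_form :: "nat \<Rightarrow> ((nat \<Rightarrow> 'v) \<Rightarrow> 'k) \<Rightarrow> bool" where
  "symmetric_form d Theta \<longleftrightarrow> (\<forall>p u. p permutes {..<d} \<longrightarrow> Theta (u \<circ> p) = Theta u)"

definition regular_form :: "((nat \<Rightarrow> 'v::zero) \<Rightarrow> 'k::zero) \<Rightarrow> bool" where
  "regular_form Theta \<longleftrightarrow> (\<forall>w. (\<forall>u. Theta (u(0 := w)) = 0) \<longrightarrow> w = 0)"

definition Cent ::
  "('k::field \<Rightarrow> 'v::ab_group_add \<Rightarrow> 'v) \<Rightarrow> ((nat \<Rightarrow> 'v) \<Rightarrow> 'k) \<Rightarrow> ('v \<Rightarrow> 'v) set" where
  "Cent scale Theta = {f. Vector_Spaces.linear scale scale f \<and>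
     (\<forall>u. Theta (u(0 := f (u 0))) = Theta (u(1 := f (u 1))))}"

definition LieTheta ::
  "('k::field \<Rightarrow> 'v::ab_group_add \<Rightarrow> 'v) \<Rightarrow> nat \<Rightarrow> ((nat \<Rightarrow> 'v) \<Rightarrow> 'k) \<Rightarrow> ('v \<Rightarrow> 'v) set" where
  "LieTheta scale d Theta = {L. Vector_Spaces.linear scale scale L \<and>
     (\<forall>u. (\<Sum>i<d. Theta (u(i := L (u i)))) = 0)}"

definition bracket :: "('v::ab_group_add \<Rightarrow> 'v) \<Rightarrow> ('v \<Rightarrow> 'v) \<Rightarrow> ('v \<Rightarrow> 'v)" where
  "bracket f g = (\<lambda>x. f (g x) - g (f x))"

end

theory Submission
  imports Defs
begin

text \<open>Apply the defining identity of \<open>f \<in> L\<^sub>\<Theta>\<close> to the tuple u with \<open>\<phi>\<close> inserted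
  in slot 0 and, separately, in slot 1. Centrality lets \<open>\<phi>\<close> migrate between these two
  slots, so the two identities agree in every term except those containing \<open>f\<phi>\<close> and \<open>\<phi>f\<close>;
  subtracting them gives \<open>\<Theta>([f,\<phi>]u\<^sub>0, u\<^sub>1, ...) = \<Theta>(u\<^sub>0, [f,\<phi>]u\<^sub>1, ...)\<close>.
  The remaining module axioms are identities between commutators of linear maps.\<close>

lemma sum_lessThan_split_first_two:
  assumes "2 \<le> (d::nat)"
  shows "(\<Sum>i<d. g i) = g 0 + g 1 + (\<Sum>i\<in>{2..<d}. g i)"
proof -
  have "{..<d} = {0, 1} \<union> {2..<d}" using assms by auto
  then show ?thesis by (simp add: sum.union_disjoint add.assoc)
qed

lemma multilinear_form_update_linear:
  assumes "multilinear_form scale d Theta" and "i < d"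
  shows "Theta (u(i := scale c x + y)) = c * Theta (u(i := x)) + Theta (u(i := y))"
  using assms unfolding multilinear_form_def by blast

lemma multilinear_form_update_diff:
  assumes "vector_space scale" and "multilinear_form scale d Theta" and "i < d"
  shows "Theta (u(i := x - y)) = Theta (u(i := x)) - Theta (u(i := y))"
  using multilinear_form_update_linear[OF assms(2,3), of u 1 "x - y" y]
  by (simp add: vector_space.vector_space_assms(4)[OF assms(1)])

lemma multilinear_form_update_zero:
  assumes "vector_space scale" and "multilinear_form scale d Theta" and "i < d"
  shows "Theta (u(i := 0)) = 0"
  using multilinear_form_update_diff[OF assms, of u 0 0] by simp

lemma CentD:
  assumes "\<phi> \<in> Cent scale Theta"
  shows "Vector_Spaces.linear scale scale \<phi>"
    and "Theta (u(0 := \<phi> (u 0))) = Theta (u(1 := \<phi> (u 1)))"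
  using assms unfolding Cent_def by auto

lemma LieThetaD:
  assumes "f \<in> LieTheta scale d Theta"
  shows "Vector_Spaces.linear scale scale f"
    and "(\<Sum>i<d. Theta (u(i := f (u i)))) = 0"
  using assms unfolding LieTheta_def by auto

lemma zero_in_Cent:
  assumes "vector_space scale" and "multilinear_form scale d Theta" and "2 \<le> d"
  shows "(\<lambda>x. 0) \<in> Cent scale Theta"
proof -
  interpret vector_space_pair scale scale
    using assms(1) by (simp add: vector_space_pair_def)
  show ?thesis
    unfolding Cent_def
    using linear_zero multilinear_form_update_zero[OF assms(1,2)] assms(3) by simp
qed

lemma Cent_linear_comb:
  assumes "multilinear_form scale d Theta" and "2 \<le> d"
    and "\<phi> \<in> Cent scale Theta" and "\<psi> \<in> Cent scale Theta"
  shows "(\<lambda>x. scale c (\<phi> x) + \<psi> x) \<in> Cent scale Theta"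
proof -
  interpret vector_space_pair scale scale
    using CentD(1)[OF assms(3)] by (simp add: Vector_Spaces.linear_iff vector_space_pair_def)
  have "Vector_Spaces.linear scale scale (\<lambda>x. scale c (\<phi> x) + \<psi> x)"
    using CentD(1)[OF assms(3)] CentD(1)[OF assms(4)]
    by (intro linear_compose_add linear_compose_scale_right)
  moreover have "Theta (u(0 := scale c (\<phi> (u 0)) + \<psi> (u 0)))
      = Theta (u(1 := scale c (\<phi> (u 1)) + \<psi> (u 1)))" for u
    using multilinear_form_update_linear[OF assms(1)] CentD(2)[OF assms(3)] CentD(2)[OF assms(4)]
      assms(2) by simp
  ultimately show ?thesis unfolding Cent_def by simp
qed

lemma linear_bracket:
  assumes "Vector_Spaces.linear scale scale f" and "Vector_Spaces.linear scale scale g"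
  shows "Vector_Spaces.linear scale scale (bracket f g)"
proof -
  interpret vector_space_pair scale scale
    using assms(1) by (simp add: Vector_Spaces.linear_iff vector_space_pair_def)
  show ?thesis
    unfolding bracket_def
    using Vector_Spaces.linear_compose[OF assms(2,1)] Vector_Spaces.linear_compose[OF assms]
    by (auto intro: linear_compose_sub simp: o_def)
qed

lemma bracket_linear_comb_left:
  assumes "Vector_Spaces.linear scale scale h"
  shows "bracket (\<lambda>x. scale c (f x) + g x) h = (\<lambda>x. scale c (bracket f h x) + bracket g h x)"
proof -
  interpret h: Vector_Spaces.linear scale scale h by fact
  show ?thesis
    unfolding bracket_def
    by (simp add: h.add h.scale h.vs1.scale_right_diff_distrib algebra_simps)
qed

lemma bracket_linear_comb_right:
  assumes "Vector_Spaces.linear scale scale f"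
  shows "bracket f (\<lambda>x. scale c (g x) + h x) = (\<lambda>x. scale c (bracket f g x) + bracket f h x)"
proof -
  interpret f: Vector_Spaces.linear scale scale f by fact
  show ?thesis
    unfolding bracket_def
    by (simp add: f.add f.scale f.vs1.scale_right_diff_distrib algebra_simps)
qed

lemma bracket_bracket_left:
  assumes "Vector_Spaces.linear scale scale f" and "Vector_Spaces.linear scale scale g"
    and "Vector_Spaces.linear scale scale h"
  shows "bracket (bracket f g) h = (\<lambda>x. bracket f (bracket g h) x - bracket g (bracket f h) x)"
proof -
  interpret f: Vector_Spaces.linear scale scale f by fact
  interpret g: Vector_Spaces.linear scale scale g by fact
  interpret h: Vector_Spaces.linear scale scale h by fact
  show ?thesis unfolding bracket_def by (simp add: f.diff g.diff h.diff algebra_simps)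
qed

lemma bracket_LieTheta_Cent:
  assumes "vector_space scale" and "multilinear_form scale d Theta" and "2 \<le> d"
    and f: "f \<in> LieTheta scale d Theta" and \<phi>: "\<phi> \<in> Cent scale Theta"
  shows "bracket f \<phi> \<in> Cent scale Theta"
proof -
  note f_derivation = LieThetaD(2)[OF f, unfolded sum_lessThan_split_first_two[OF assms(3)]]
  note \<phi>_central = CentD(2)[OF \<phi>]
  have "Theta (u(0 := bracket f \<phi> (u 0))) = Theta (u(1 := bracket f \<phi> (u 1)))" for u
  proof -
    define v where "v = u(0 := \<phi> (u 0))"
    define w where "w = u(1 := \<phi> (u 1))"
    define R where "R = (\<Sum>i\<in>{2..<d}. Theta (v(i := f (v i))))"
    have "Theta (w(i := f (w i))) = Theta (v(i := f (v i)))" if "i \<in> {2..<d}" for i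
      using \<phi>_central[of "u(i := f (u i))"] that by (simp add: v_def w_def fun_upd_twist)
    then have "(\<Sum>i\<in>{2..<d}. Theta (w(i := f (w i)))) = R"
      unfolding R_def by (rule sum.cong[OF refl])
    then have "Theta (u(0 := \<phi> (f (u 0)))) + Theta (u(1 := f (\<phi> (u 1)))) + R = 0"
      using f_derivation[of w] \<phi>_central[of "u(0 := f (u 0))"]
      by (simp add: w_def fun_upd_twist)
    moreover have "Theta (u(0 := f (\<phi> (u 0)))) + Theta (u(1 := \<phi> (f (u 1)))) + R = 0"
      using f_derivation[of v] \<phi>_central[of "u(1 := f (u 1))"]
      by (simp add: R_def v_def fun_upd_twist)
    ultimately have "Theta (u(0 := f (\<phi> (u 0)))) - Theta (u(0 := \<phi> (f (u 0))))
        = Theta (u(1 := f (\<phi> (u 1)))) - Theta (u(1 := \<phi> (f (u 1))))"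
      by algebra
    then show ?thesis
      using assms(3) unfolding bracket_def by (simp add: multilinear_form_update_diff[OF assms(1,2)])
  qed
  then show ?thesis
    unfolding Cent_def using linear_bracket LieThetaD(1)[OF f] CentD(1)[OF \<phi>] by simp
qed

theorem proposition2p14:
  fixes scale :: "'k::field \<Rightarrow> 'v::ab_group_add \<Rightarrow> 'v"
    and B :: "'v set"
    and d :: nat
    and Theta :: "(nat \<Rightarrow> 'v) \<Rightarrow> 'k"
  assumes fd: "finite_dimensional_vector_space scale B"
    and char: "CHAR('k) = 0 \<or> CHAR('k) > d"
    and d3: "d \<ge> 3"
    and ml: "multilinear_form scale d Theta"
    and sym: "symmetric_form d Theta"
    and reg: "regular_form Theta"
  shows
    \<comment> \<open>the bracket of L_Theta with the center lands in the center\<close>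
    "(\<forall>f\<in>LieTheta scale d Theta. \<forall>\<phi>\<in>Cent scale Theta. bracket f \<phi> \<in> Cent scale Theta)
     \<comment> \<open>Cent is a k-subspace of End(V)\<close>
     \<and> (\<lambda>x. 0) \<in> Cent scale Theta
     \<and> (\<forall>\<phi>\<in>Cent scale Theta. \<forall>\<psi>\<in>Cent scale Theta. \<forall>c.
          (\<lambda>x. scale c (\<phi> x) + \<psi> x) \<in> Cent scale Theta)
     \<comment> \<open>the action f . phi = [f, phi] is bilinear\<close>
     \<and> (\<forall>f\<in>LieTheta scale d Theta. \<forall>g\<in>LieTheta scale d Theta. \<forall>\<phi>\<in>Cent scale Theta. \<forall>c.
          bracket (\<lambda>x. scale c (f x) + g x) \<phi> = (\<lambda>x. scale c (bracket f \<phi> x) + bracket g \<phi> x))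
     \<and> (\<forall>f\<in>LieTheta scale d Theta. \<forall>\<phi>\<in>Cent scale Theta. \<forall>\<psi>\<in>Cent scale Theta. \<forall>c.
          bracket f (\<lambda>x. scale c (\<phi> x) + \<psi> x) = (\<lambda>x. scale c (bracket f \<phi> x) + bracket f \<psi> x))
     \<comment> \<open>Lie module axiom: [f,g] . phi = f . (g . phi) - g . (f . phi)\<close>
     \<and> (\<forall>f\<in>LieTheta scale d Theta. \<forall>g\<in>LieTheta scale d Theta. \<forall>\<phi>\<in>Cent scale Theta.
          bracket (bracket f g) \<phi> = (\<lambda>x. bracket f (bracket g \<phi>) x - bracket g (bracket f \<phi>) x))"
proof -
  have vs: "vector_space scale"
    using fd by (simp add: finite_dimensional_vector_space_def)
  have d2: "2 \<le> d"
    using d3 by simp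
  show ?thesis
    by (intro conjI ballI allI
        bracket_LieTheta_Cent[OF vs ml d2] zero_in_Cent[OF vs ml d2] Cent_linear_comb[OF ml d2]
        bracket_linear_comb_left[OF CentD(1)] bracket_linear_comb_right[OF LieThetaD(1)]
        bracket_bracket_left[OF LieThetaD(1) LieThetaD(1) CentD(1)])
qed

end
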